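(* Let $n\ge1$, $\boldsymbol z\in\{0,1\}^n$, and $\boldsymbol y,\boldsymbol y'\in\overline{\mathbb R}^n$ with $y_i\le y_i'$ if $z_i=1$ and $y_i\ge y_i'$ if $z_i=0$. Let $a,b>0$, $\gamma=\min(\{y_i:y_i\in\mathbb R\}\cup\{y_i':y_i'\in\mathbb R\})-a$ and $\zeta=\max(\{y_i:y_i\in\mathbb R\}\cup\{y_i':y_i'\in\mathbb R\})+b$, and define $\tilde{\boldsymbol y},\tilde{\boldsymbol y}'\in\mathbb R^n$ by replacing each coordinate equal to $-\infty$ by $\gamma$ and each coordinate equal to $+\infty$ by $\zeta$ (real coordinates unchanged). Then, for the rank-sum statistic $t_{\mathrm R,\phi}$: (a) $\tilde y_i\le\tilde y_i'$ if $z_i=1$ and $\tilde y_i\ge\tilde y_i'$ if $z_i=0$; (b) $t_{\mathrm R,\phi}(\boldsymbol z,\boldsymbol y)=t_{\mathrm R,\phi}(\boldsymbol z,\tilde{\boldsymbol y})$ and $t_{\mathrm R,\phi}(\boldsymbol z,\boldsymbol y')=t_{\mathrm R,\phi}(\boldsymbol z,\tilde{\boldsymbol y}')$; (c) $t_{\mathrm R,\phi}(\boldsymbol z,\boldsymbol y)\le t_{\mathrm R,\phi}(\boldsymbol z,\boldsymbol y')$.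
   Context: $\overline{\mathbb R}=\mathbb R\cup\{\pm\infty\}$. For $1\le i,j\le n$ and $y,y'\in\overline{\mathbb R}$, $\psi_{i,j}(y,y')=\mathbf 1\{y>y'\}+\mathbf 1\{y=y'\}\mathbf 1\{i\ge j\}$; $\mathrm{rank}_i(\boldsymbol y)=\sum_{j=1}^n\psi_{i,j}(y_i,y_j)$. $\phi$ is a fixed nondecreasing real function on the nonnegative integers. Rank-sum statistic: $t_{\mathrm R,\phi}(\boldsymbol z,\boldsymbol y)=\sum_{i=1}^nz_i\phi(\mathrm{rank}_i(\boldsymbol y))$. *)

theory Defs
  imports Complex_Main "HOL-Library.Extended_Real"
begin

text \<open>Vectors are indexed by 1..n, represented as functions on nat.\<close>

definition psi :: "nat \<Rightarrow> nat \<Rightarrow> 'a::linorder \<Rightarrow> 'a \<Rightarrow> nat" where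
  "psi i j u v = (if u > v then 1 else 0) + (if u = v \<and> i \<ge> j then 1 else 0)"

definition rank :: "nat \<Rightarrow> (nat \<Rightarrow> 'a::linorder) \<Rightarrow> nat \<Rightarrow> nat" where
  "rank n y i = (\<Sum>j = 1..n. psi i j (y i) (y j))"

definition t_R :: "(nat \<Rightarrow> real) \<Rightarrow> nat \<Rightarrow> (nat \<Rightarrow> real) \<Rightarrow> (nat \<Rightarrow> 'a::linorder) \<Rightarrow> real" where
  "t_R \<phi> n z y = (\<Sum>i = 1..n. z i * \<phi> (rank n y i))"

definition finite_vals :: "nat \<Rightarrow> (nat \<Rightarrow> ereal) \<Rightarrow> (nat \<Rightarrow> ereal) \<Rightarrow> real set" where
  "finite_vals n y y' =
     {real_of_ereal (y i) | i. i \<in> {1..n} \<and> \<bar>y i\<bar> \<noteq> \<infinity>} \<union>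
     {real_of_ereal (y' i) | i. i \<in> {1..n} \<and> \<bar>y' i\<bar> \<noteq> \<infinity>}"

text \<open>Convention: min/max of the empty set taken to be 0.\<close>
definition gamma_lo :: "nat \<Rightarrow> (nat \<Rightarrow> ereal) \<Rightarrow> (nat \<Rightarrow> ereal) \<Rightarrow> real \<Rightarrow> real" where
  "gamma_lo n y y' a =
     (if finite_vals n y y' = {} then 0 else Min (finite_vals n y y')) - a"

definition zeta_hi :: "nat \<Rightarrow> (nat \<Rightarrow> ereal) \<Rightarrow> (nat \<Rightarrow> ereal) \<Rightarrow> real \<Rightarrow> real" where
  "zeta_hi n y y' b =
     (if finite_vals n y y' = {} then 0 else Max (finite_vals n y y')) + b"

definition replace_inf :: "real \<Rightarrow> real \<Rightarrow> (nat \<Rightarrow> ereal) \<Rightarrow> nat \<Rightarrow> real" where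
  "replace_inf \<gamma> \<zeta> y i =
     (if y i = -\<infinity> then \<gamma> else if y i = \<infinity> then \<zeta> else real_of_ereal (y i))"

end

theory Submission
  imports Defs
begin

text \<open>
  Sending \<open>-\<infinity>\<close> below and \<open>+\<infinity>\<close> above every finite observed value is strictly monotone on the
  observed values, so it preserves the orderings between coordinates and hence all ranks, which
  gives (a) and (b). For (c), the ranks of \<open>n\<close> values form a permutation of \<open>1..n\<close>, so the
  statistic is \<open>\<Sum>r=1..n. \<phi> r\<close> minus the control units' terms. Raising the value of a treated unit
  can only lower the ranks of all other units, and lowering the value of a control unit can only
  raise them; moving from \<open>y\<close> to \<open>y'\<close> one coordinate at a time therefore never decreases the
  statistic.
\<close>

lemma psi_antimono:
  fixes u v v' :: "'a::linorder"
  assumes "v \<le> v'"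
  shows "psi i j u v' \<le> psi i j u v"
  using assms unfolding psi_def by auto

lemma psi_strict_mono_on:
  assumes "strict_mono_on S g" "u \<in> S" "v \<in> S"
  shows "psi i j (g u) (g v) = psi i j u v"
  using assms unfolding psi_def by (simp add: strict_mono_on_less strict_mono_on_eq)

lemma rank_eq_card:
  "rank n y i = card {j \<in> {1..n}. y j < y i \<or> (y j = y i \<and> j \<le> i)}"
proof -
  have "rank n y i = (\<Sum>j = 1..n. if y j < y i \<or> (y j = y i \<and> j \<le> i) then 1 else 0)"
    unfolding rank_def psi_def by (intro sum.cong) auto
  then show ?thesis
    by (simp add: sum.inter_filter[symmetric])
qed

lemma rank_less_rank:
  fixes y :: "nat \<Rightarrow> 'a::linorder"
  assumes "i \<in> {1..n}" "j \<in> {1..n}" "y i < y j \<or> (y i = y j \<and> i < j)"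
  shows "rank n y i < rank n y j"
proof -
  define below where "below k = {l \<in> {1..n}. y l < y k \<or> (y l = y k \<and> l \<le> k)}" for k
  have "below i \<subseteq> below j"
    using assms unfolding below_def by auto
  moreover have "j \<in> below j - below i"
    using assms unfolding below_def by auto
  ultimately have "below i \<subset> below j"
    by blast
  then show ?thesis
    unfolding rank_eq_card below_def[symmetric] by (intro psubset_card_mono) (simp add: below_def)
qed

lemma rank_in_range:
  assumes "i \<in> {1..n}"
  shows "rank n y i \<in> {1..n}"
proof -
  let ?below = "{j \<in> {1..n}. y j < y i \<or> (y j = y i \<and> j \<le> i)}"
  have "i \<in> ?below"
    using assms by simp
  then have "0 < card ?below"
    by (auto simp: card_gt_0_iff)
  moreover have "card ?below \<le> card {1..n}"
    by (intro card_mono) auto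
  ultimately show ?thesis
    by (simp add: rank_eq_card)
qed

lemma bij_betw_rank:
  fixes y :: "nat \<Rightarrow> 'a::linorder"
  shows "bij_betw (rank n y) {1..n} {1..n}"
proof -
  have inj: "inj_on (rank n y) {1..n}"
  proof (rule inj_onI, rule ccontr)
    fix i j
    assume ij: "i \<in> {1..n}" "j \<in> {1..n}" "rank n y i = rank n y j" and "i \<noteq> j"
    then have "y i < y j \<or> (y i = y j \<and> i < j) \<or> y j < y i \<or> (y j = y i \<and> j < i)"
      by auto
    then show False
      using rank_less_rank[of i n j y] rank_less_rank[of j n i y] ij by auto
  qed
  have "rank n y ` {1..n} \<subseteq> {1..n}"
    by (rule image_subsetI) (rule rank_in_range)
  then have "rank n y ` {1..n} = {1..n}"
    by (rule endo_inj_surj[OF finite_atLeastAtMost _ inj])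
  with inj show ?thesis
    unfolding bij_betw_def ..
qed

lemma t_R_eq_total_minus_controls:
  fixes y :: "nat \<Rightarrow> 'a::linorder"
  shows "t_R \<phi> n z y = (\<Sum>r = 1..n. \<phi> r) - (\<Sum>i = 1..n. (1 - z i) * \<phi> (rank n y i))"
proof -
  have "(\<Sum>i = 1..n. (1 - z i) * \<phi> (rank n y i))
      = (\<Sum>i = 1..n. \<phi> (rank n y i)) - (\<Sum>i = 1..n. z i * \<phi> (rank n y i))"
    by (simp add: left_diff_distrib sum_subtractf)
  also have "(\<Sum>i = 1..n. \<phi> (rank n y i)) = (\<Sum>r = 1..n. \<phi> r)"
    using sum.reindex_bij_betw[OF bij_betw_rank] .
  finally show ?thesis
    unfolding t_R_def by simp
qed

lemma t_R_cong:
  assumes "\<And>i. i \<in> {1..n} \<Longrightarrow> y i = y' i"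
  shows "t_R \<phi> n z y = t_R \<phi> n z y'"
  unfolding t_R_def rank_def using assms by (intro sum.cong) auto

lemma rank_fun_upd_le:
  fixes w :: "nat \<Rightarrow> 'a::linorder"
  assumes "i \<noteq> k" "w k \<le> v"
  shows "rank n (w(k := v)) i \<le> rank n w i"
  unfolding rank_def using assms psi_antimono[OF assms(2)] by (intro sum_mono) auto

lemma t_R_fun_upd_mono:
  fixes w :: "nat \<Rightarrow> 'a::linorder"
  assumes "mono \<phi>" "\<forall>i\<in>{1..n}. z i \<in> {0, 1}" "k \<in> {1..n}"
    and "z k = 1 \<Longrightarrow> w k \<le> v" and "z k = 0 \<Longrightarrow> v \<le> w k"
  shows "t_R \<phi> n z w \<le> t_R \<phi> n z (w(k := v))"
proof -
  have z_cases: "z i = 0 \<or> z i = 1" if "i \<in> {1..n}" for i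
    using assms(2) that by auto
  show ?thesis
  proof (cases "z k = 0")
    case True
    have "z i * \<phi> (rank n w i) \<le> z i * \<phi> (rank n (w(k := v)) i)" if "i \<in> {1..n}" for i
    proof (cases "i = k")
      case False
      have "rank n ((w(k := v))(k := w k)) i \<le> rank n (w(k := v)) i"
        using False True assms(5) by (intro rank_fun_upd_le) auto
      then show ?thesis
        using z_cases[OF that] assms(1) by (auto dest: monoD)
    qed (use True in simp)
    then show ?thesis
      unfolding t_R_def by (rule sum_mono)
  next
    case False
    then have treated: "z k = 1"
      using z_cases[OF assms(3)] by simp
    have "(1 - z i) * \<phi> (rank n (w(k := v)) i) \<le> (1 - z i) * \<phi> (rank n w i)"
      if "i \<in> {1..n}" for i
    proof (cases "i = k")
      case False
      have "rank n (w(k := v)) i \<le> rank n w i"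
        using False treated assms(4) by (intro rank_fun_upd_le) auto
      then show ?thesis
        using z_cases[OF that] assms(1) by (auto dest: monoD)
    qed (use treated in simp)
    then have "(\<Sum>i = 1..n. (1 - z i) * \<phi> (rank n (w(k := v)) i))
        \<le> (\<Sum>i = 1..n. (1 - z i) * \<phi> (rank n w i))"
      by (rule sum_mono)
    then show ?thesis
      unfolding t_R_eq_total_minus_controls by simp
  qed
qed

lemma t_R_mono:
  fixes y y' :: "nat \<Rightarrow> 'a::linorder"
  assumes "mono \<phi>" "\<forall>i\<in>{1..n}. z i \<in> {0, 1}"
    and "\<forall>i\<in>{1..n}. z i = 1 \<longrightarrow> y i \<le> y' i"
    and "\<forall>i\<in>{1..n}. z i = 0 \<longrightarrow> y i \<ge> y' i"
  shows "t_R \<phi> n z y \<le> t_R \<phi> n z y'"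
proof -
  define W where "W m = (\<lambda>i. if i \<le> m then y' i else y i)" for m
  have "t_R \<phi> n z (W 0) \<le> t_R \<phi> n z (W m)" if "m \<le> n" for m
    using that
  proof (induction m)
    case (Suc m)
    have "t_R \<phi> n z (W 0) \<le> t_R \<phi> n z (W m)"
      using Suc by simp
    also have "\<dots> \<le> t_R \<phi> n z ((W m)(Suc m := y' (Suc m)))"
      using assms Suc.prems by (intro t_R_fun_upd_mono) (auto simp: W_def)
    also have "(W m)(Suc m := y' (Suc m)) = W (Suc m)"
      unfolding W_def by auto
    finally show ?case .
  qed simp
  moreover have "t_R \<phi> n z (W 0) = t_R \<phi> n z y" "t_R \<phi> n z (W n) = t_R \<phi> n z y'"
    by (auto intro: t_R_cong simp: W_def)
  ultimately show ?thesis
    by fastforce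
qed

lemma t_R_comp_strict_mono_on:
  assumes "strict_mono_on (y ` {1..n}) g"
  shows "t_R \<phi> n z (g \<circ> y) = t_R \<phi> n z y"
  unfolding t_R_def rank_def using psi_strict_mono_on[OF assms] by (intro sum.cong) auto

definition replace_inf_val :: "real \<Rightarrow> real \<Rightarrow> ereal \<Rightarrow> real" where
  "replace_inf_val \<gamma> \<zeta> x = (if x = -\<infinity> then \<gamma> else if x = \<infinity> then \<zeta> else real_of_ereal x)"

lemma replace_inf_eq_comp: "replace_inf \<gamma> \<zeta> y = replace_inf_val \<gamma> \<zeta> \<circ> y"
  unfolding replace_inf_def replace_inf_val_def by auto

lemma strict_mono_on_replace_inf_val:
  assumes "\<gamma> < \<zeta>"
    and "\<And>x. x \<in> S \<Longrightarrow> \<bar>x\<bar> \<noteq> \<infinity> \<Longrightarrow> \<gamma> < real_of_ereal x \<and> real_of_ereal x < \<zeta>"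
  shows "strict_mono_on S (replace_inf_val \<gamma> \<zeta>)"
proof (rule strict_mono_onI)
  fix u v
  assume u: "u \<in> S" and v: "v \<in> S" and "u < v"
  have "\<gamma> < real_of_ereal u \<and> real_of_ereal u < \<zeta>" if "\<bar>u\<bar> \<noteq> \<infinity>"
    using assms(2)[OF u that] .
  moreover have "\<gamma> < real_of_ereal v \<and> real_of_ereal v < \<zeta>" if "\<bar>v\<bar> \<noteq> \<infinity>"
    using assms(2)[OF v that] .
  ultimately show "replace_inf_val \<gamma> \<zeta> u < replace_inf_val \<gamma> \<zeta> v"
    using \<open>u < v\<close> assms(1)
    by (cases u rule: ereal_cases; cases v rule: ereal_cases) (simp_all add: replace_inf_val_def)
qed

lemma finite_finite_vals: "finite (finite_vals n y y')"
proof (rule finite_subset)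
  show "finite_vals n y y' \<subseteq> (real_of_ereal \<circ> y) ` {1..n} \<union> (real_of_ereal \<circ> y') ` {1..n}"
    unfolding finite_vals_def by auto
qed simp

lemma gamma_lo_less:
  assumes "a > 0" "r \<in> finite_vals n y y'"
  shows "gamma_lo n y y' a < r"
  using assms Min_le[OF finite_finite_vals] unfolding gamma_lo_def by fastforce

lemma zeta_hi_greater:
  assumes "b > 0" "r \<in> finite_vals n y y'"
  shows "r < zeta_hi n y y' b"
  using assms Max_ge[OF finite_finite_vals] unfolding zeta_hi_def by fastforce

lemma gamma_lo_less_zeta_hi:
  assumes "a > 0" "b > 0"
  shows "gamma_lo n y y' a < zeta_hi n y y' b"
proof (cases "finite_vals n y y' = {}")
  case False
  then obtain r where "r \<in> finite_vals n y y'"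
    by blast
  then show ?thesis
    using gamma_lo_less[OF assms(1)] zeta_hi_greater[OF assms(2)] by fastforce
qed (use assms in \<open>simp add: gamma_lo_def zeta_hi_def\<close>)

lemma strict_mono_on_replace_inf_val_gamma_lo_zeta_hi:
  assumes "a > 0" "b > 0"
  shows "strict_mono_on (y ` {1..n} \<union> y' ` {1..n})
           (replace_inf_val (gamma_lo n y y' a) (zeta_hi n y y' b))"
proof (rule strict_mono_on_replace_inf_val)
  fix x
  assume "x \<in> y ` {1..n} \<union> y' ` {1..n}" "\<bar>x\<bar> \<noteq> \<infinity>"
  then obtain i where "i \<in> {1..n}" "x = y i \<or> x = y' i"
    by blast
  then have "real_of_ereal x \<in> finite_vals n y y'"
    using \<open>\<bar>x\<bar> \<noteq> \<infinity>\<close> unfolding finite_vals_def by auto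
  then show "gamma_lo n y y' a < real_of_ereal x \<and> real_of_ereal x < zeta_hi n y y' b"
    using gamma_lo_less[OF assms(1)] zeta_hi_greater[OF assms(2)] by blast
qed (rule gamma_lo_less_zeta_hi[OF assms])

theorem lemma4:
  fixes n :: nat and z :: "nat \<Rightarrow> real" and y y' :: "nat \<Rightarrow> ereal"
    and a b :: real and \<phi> :: "nat \<Rightarrow> real"
  assumes "n \<ge> 1"
    and "mono \<phi>"
    and "\<forall>i\<in>{1..n}. z i \<in> {0, 1}"
    and "\<forall>i\<in>{1..n}. z i = 1 \<longrightarrow> y i \<le> y' i"
    and "\<forall>i\<in>{1..n}. z i = 0 \<longrightarrow> y i \<ge> y' i"
    and "a > 0" and "b > 0"
  shows "let \<gamma> = gamma_lo n y y' a; \<zeta> = zeta_hi n y y' b;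
             yt = replace_inf \<gamma> \<zeta> y; yt' = replace_inf \<gamma> \<zeta> y'
         in (\<forall>i\<in>{1..n}. (z i = 1 \<longrightarrow> yt i \<le> yt' i) \<and> (z i = 0 \<longrightarrow> yt i \<ge> yt' i))
          \<and> t_R \<phi> n z y = t_R \<phi> n z yt \<and> t_R \<phi> n z y' = t_R \<phi> n z yt'
          \<and> t_R \<phi> n z y \<le> t_R \<phi> n z y'"
proof -
  define S where "S = y ` {1..n} \<union> y' ` {1..n}"
  define g where "g = replace_inf_val (gamma_lo n y y' a) (zeta_hi n y y' b)"
  have g: "strict_mono_on S g"
    unfolding S_def g_def using strict_mono_on_replace_inf_val_gamma_lo_zeta_hi assms(6,7) .
  have "\<forall>i\<in>{1..n}. (z i = 1 \<longrightarrow> g (y i) \<le> g (y' i)) \<and> (z i = 0 \<longrightarrow> g (y i) \<ge> g (y' i))"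
    using assms(4,5) by (auto intro!: strict_mono_on_leD[OF g] simp: S_def)
  moreover have "t_R \<phi> n z (g \<circ> y) = t_R \<phi> n z y" "t_R \<phi> n z (g \<circ> y') = t_R \<phi> n z y'"
    by (rule t_R_comp_strict_mono_on, rule monotone_on_subset[OF g], simp add: S_def)+
  moreover have "t_R \<phi> n z y \<le> t_R \<phi> n z y'"
    using t_R_mono assms(2-5) .
  ultimately show ?thesis
    unfolding Let_def replace_inf_eq_comp g_def[symmetric] by simp
qed

end
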